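(* Let $\mathcal{D}$ be a distribution over subsets of $V$ with $\mathbb{E}_{S\sim\mathcal{D}}[|S|]>0$. If $$\frac{\mathbb{E}_{S\sim\mathcal{D}}[\mathrm{Cut}(S,V\setminus S)]}{\mathbb{E}_{S\sim\mathcal{D}}[|V\setminus S|]}\ \ge\ \frac{\mathbb{E}_{S\sim\mathcal{D}}[\mathrm{Induced}(S)]}{\mathbb{E}_{S\sim\mathcal{D}}[|S|]},$$ where the left-hand side is interpreted as $+\infty$ when $\mathcal{D}$ is the point mass at $V$, then for $\alpha=\mathbb{E}_{S\sim\mathcal{D}}[|S|]/\mathbb{E}_{S\sim\mathcal{D}}[\mathrm{Induced}(S)]$ the identity-independent signaling scheme with signal space $\{0,\alpha\}$ that draws $S\sim\mathcal{D}$ and sets $s_v=\alpha\cdot\mathbf 1\{v\in S\}$ is persuasive, and its cost equals $\frac{(\mathbb{E}_{S\sim\mathcal{D}}[|S|])^2}{\mathbb{E}_{S\sim\mathcal{D}}[\mathrm{Induced}(S)]}\le\mathbb{E}_{S\sim\mathcal{D}}[|S|]$.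
   Context: Setting. $V$ is a finite set of $n$ task types and $W=(W_{u,v})_{u,v\in V}$ is a symmetric matrix with entries in $[0,1]$ and $W_{v,v}=1$. For $S\subseteq V$: $\mathrm{Cut}(S,V\setminus S)=\sum_{u\in S}\sum_{v\in V\setminus S}W_{u,v}$ and $\mathrm{Induced}(S)=\sum_{u\in S}\sum_{v\in S}W_{u,v}$ (diagonal terms included). There are $n$ agents; the type profile $t=(t_1,\dots,t_n)$ is a uniformly random bijection $[n]\to V$. An identity-independent signaling scheme with finite signal space $\Sigma\subset[0,1]$ is a distribution on $\Sigma^V$: $s\sim$ it is drawn independently of $t$ and agent $i$ privately receives $s_{t_i}$. For agent $i$, a signal $\theta\in\Sigma$ with $\Pr[s_{t_i}=\theta]>0$ and $x\ge0$, let $Q_i(x\mid\theta)=\mathbb{E}\big[x+\sum_{v'\neq t_i}W_{t_i,v'}s_{v'}\,\big|\,s_{t_i}=\theta\big]$. The scheme is persuasive if for every agent $i$ and every such $\theta$: $Q_i(\theta\mid\theta)\ge1$ and $\theta=\min\{x\ge0:Q_i(x\mid\theta)\ge1\}$. Its cost is $\mathbb{E}[\|s\|_1]$. *)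

theory Defs
  imports "HOL-Probability.Probability"
begin

definition Cut :: "('v \<Rightarrow> 'v \<Rightarrow> real) \<Rightarrow> 'v set \<Rightarrow> 'v set \<Rightarrow> real" where
  "Cut W S T = (\<Sum>u\<in>S. \<Sum>v\<in>T. W u v)"

definition Induced :: "('v \<Rightarrow> 'v \<Rightarrow> real) \<Rightarrow> 'v set \<Rightarrow> real" where
  "Induced W S = (\<Sum>u\<in>S. \<Sum>v\<in>S. W u v)"

text \<open>Uniformly random type profile: a bijection from agents 0..n-1 (n = card V) to V.\<close>

definition type_profiles :: "'v set \<Rightarrow> (nat \<Rightarrow> 'v) set" where
  "type_profiles V = {t \<in> extensional {..<card V}. bij_betw t {..<card V} V}"

definition type_dist :: "'v set \<Rightarrow> (nat \<Rightarrow> 'v) pmf" where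
  "type_dist V = pmf_of_set (type_profiles V)"

text \<open>An identity-independent signaling scheme with finite signal space Sigma in [0,1]:
  a distribution over signal vectors s : V \<Rightarrow> Sigma (values outside V are irrelevant).\<close>

definition is_signaling_scheme :: "'v set \<Rightarrow> real set \<Rightarrow> ('v \<Rightarrow> real) pmf \<Rightarrow> bool" where
  "is_signaling_scheme V Sig sch \<longleftrightarrow>
     finite Sig \<and> Sig \<subseteq> {0..1} \<and> (\<forall>s\<in>set_pmf sch. \<forall>v\<in>V. s v \<in> Sig)"

definition joint :: "'v set \<Rightarrow> ('v \<Rightarrow> real) pmf \<Rightarrow> ((nat \<Rightarrow> 'v) \<times> ('v \<Rightarrow> real)) pmf" where
  "joint V sch = pair_pmf (type_dist V) sch"

definition sig_event :: "nat \<Rightarrow> real \<Rightarrow> ((nat \<Rightarrow> 'v) \<times> ('v \<Rightarrow> real)) set" where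
  "sig_event i \<theta> = {(t, s). s (t i) = \<theta>}"

definition Q :: "'v set \<Rightarrow> ('v \<Rightarrow> 'v \<Rightarrow> real) \<Rightarrow> ('v \<Rightarrow> real) pmf \<Rightarrow> nat \<Rightarrow> real \<Rightarrow> real \<Rightarrow> real" where
  "Q V W sch i x \<theta> =
     measure_pmf.expectation (cond_pmf (joint V sch) (sig_event i \<theta>))
       (\<lambda>(t, s). x + (\<Sum>v'\<in>V - {t i}. W (t i) v' * s v'))"

definition persuasive :: "'v set \<Rightarrow> ('v \<Rightarrow> 'v \<Rightarrow> real) \<Rightarrow> ('v \<Rightarrow> real) pmf \<Rightarrow> bool" where
  "persuasive V W sch \<longleftrightarrow>
     (\<forall>i < card V. \<forall>\<theta>::real.
        measure_pmf.prob (joint V sch) (sig_event i \<theta>) > 0 \<longrightarrow>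
          Q V W sch i \<theta> \<theta> \<ge> 1 \<and> \<theta> = (LEAST x::real. 0 \<le> x \<and> Q V W sch i x \<theta> \<ge> 1))"

definition cost :: "'v set \<Rightarrow> ('v \<Rightarrow> real) pmf \<Rightarrow> real" where
  "cost V sch = measure_pmf.expectation sch (\<lambda>s. \<Sum>v\<in>V. \<bar>s v\<bar>)"

end

theory Submission
  imports Defs
begin

(* Types are assigned by a uniformly random bijection, so the type of any agent is uniform
   on V and independent of the signal vector s.  Conditioning on s_{t_i} = theta therefore
   weights every type u by [s_u = theta], and
     Q_i(x | theta) = x + E[sum_{u : s_u = theta} sum_{v <> u} W u v * s_v] / E[#{u : s_u = theta}]
   for every agent.  For s = alpha * 1_S only the signals alpha and 0 occur.  On alpha this
   gives x + alpha * (E Induced(S) / E|S| - 1) = x + 1 - alpha, so the least obedient x is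
   alpha itself; on 0 it gives x + alpha * E Cut(S, V - S) / E|V - S|, which is at least 1
   by the ratio hypothesis, so the least obedient x is 0.  Finally W >= 0 and W v v = 1 give
   Induced(S) >= |S|, whence alpha <= 1 and the cost alpha * E|S| is at most E|S|. *)

lemma finite_type_profiles: "finite V \<Longrightarrow> finite (type_profiles V)"
proof -
  assume "finite V"
  have "type_profiles V \<subseteq> PiE {..<card V} (\<lambda>_. V)"
    unfolding type_profiles_def by (auto simp: PiE_def Pi_def bij_betw_def)
  moreover have "finite (PiE {..<card V} (\<lambda>_. V))"
    using \<open>finite V\<close> by (intro finite_PiE) auto
  ultimately show ?thesis by (rule finite_subset)
qed

lemma type_profiles_nonempty: "finite V \<Longrightarrow> type_profiles V \<noteq> {}"
proof -
  assume "finite V"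
  then obtain h where "bij_betw h {..<card V} V"
    using ex_bij_betw_nat_finite by (auto simp: atLeast0LessThan)
  then have "restrict h {..<card V} \<in> type_profiles V"
    unfolding type_profiles_def by (auto intro: bij_betw_cong[THEN iffD1, rotated])
  then show ?thesis by blast
qed

lemma transpose_comp_type_profile:
  assumes "t \<in> type_profiles V" and "v \<in> V" and "w \<in> V"
  shows "restrict (Transposition.transpose v w \<circ> t) {..<card V} \<in> type_profiles V"
proof -
  have "bij_betw (Transposition.transpose v w \<circ> t) {..<card V} V"
    using assms by (intro bij_betw_trans[of t _ V]) (auto simp: type_profiles_def)
  then have "bij_betw (restrict (Transposition.transpose v w \<circ> t) {..<card V}) {..<card V} V"
    by (rule bij_betw_cong[THEN iffD1, rotated]) simp
  then show ?thesis by (simp add: type_profiles_def)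
qed

lemma card_agent_type_le:
  assumes "finite V" and "v \<in> V" and "w \<in> V" and "i < card V"
  shows "card {t \<in> type_profiles V. t i = v} \<le> card {t \<in> type_profiles V. t i = w}"
proof (rule card_inj_on_le)
  let ?f = "\<lambda>t. restrict (Transposition.transpose v w \<circ> t) {..<card V}"
  show "inj_on ?f {t \<in> type_profiles V. t i = v}"
  proof (rule inj_onI, rule extensionalityI)
    fix t t' assume t: "t \<in> {t \<in> type_profiles V. t i = v}" "t' \<in> {t \<in> type_profiles V. t i = v}"
      and eq: "?f t = ?f t'"
    show "t \<in> extensional {..<card V}" "t' \<in> extensional {..<card V}"
      using t by (auto simp: type_profiles_def)
    fix x assume "x \<in> {..<card V}"
    then have "Transposition.transpose v w (t x) = Transposition.transpose v w (t' x)"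
      using fun_cong[OF eq, of x] by simp
    then show "t x = t' x" by (rule transpose_eq_imp_eq)
  qed
  show "?f ` {t \<in> type_profiles V. t i = v} \<subseteq> {t \<in> type_profiles V. t i = w}"
    using assms transpose_comp_type_profile by auto
  show "finite {t \<in> type_profiles V. t i = w}"
    using finite_type_profiles[OF \<open>finite V\<close>] by simp
qed

lemma agent_type_uniform:
  assumes "finite V" and "i < card V"
  shows "map_pmf (\<lambda>t. t i) (type_dist V) = pmf_of_set V"
proof -
  let ?p = "map_pmf (\<lambda>t. t i) (type_dist V)"
  have V: "V \<noteq> {}" using \<open>i < card V\<close> by auto
  have TP: "finite (type_profiles V)" "type_profiles V \<noteq> {}"
    using assms finite_type_profiles type_profiles_nonempty by auto
  have supp: "set_pmf ?p \<subseteq> V"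
    using TP \<open>i < card V\<close> by (auto simp: type_dist_def type_profiles_def bij_betw_def)
  have pmf_p: "pmf ?p v = card {t \<in> type_profiles V. t i = v} / card (type_profiles V)" for v
    using TP by (simp add: pmf_map type_dist_def measure_pmf_of_set Int_def vimage_def)
  obtain v0 where v0: "v0 \<in> V" using V by blast
  have const: "pmf ?p v = pmf ?p v0" if "v \<in> V" for v
    using pmf_p card_agent_type_le[OF assms(1) that v0 assms(2)]
      card_agent_type_le[OF assms(1) v0 that assms(2)] by simp
  have "1 = (\<Sum>v\<in>V. pmf ?p v)" using sum_pmf_eq_1[OF assms(1) supp] by simp
  also have "\<dots> = card V * pmf ?p v0" using const by simp
  finally have "pmf ?p v0 = 1 / card V" using V assms(1) by (simp add: field_simps)
  with const have "pmf ?p v = pmf (pmf_of_set V) v" for v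
    using supp assms(1) V by (cases "v \<in> V") (auto simp: pmf_eq_0_set_pmf)
  then show ?thesis by (rule pmf_eqI)
qed

lemma expectation_cond_pmf:
  fixes f :: "'a \<Rightarrow> real"
  assumes "finite (set_pmf p)" and "measure_pmf.prob p A > 0"
  shows "measure_pmf.expectation (cond_pmf p A) f
       = measure_pmf.expectation p (\<lambda>z. indicator A z * f z) / measure_pmf.prob p A"
proof -
  have ne: "set_pmf p \<inter> A \<noteq> {}"
    using assms(2) measure_pmf_zero_iff[of p A] by auto
  have "measure_pmf.expectation (cond_pmf p A) f = (\<Sum>z\<in>set_pmf p. f z * pmf (cond_pmf p A) z)"
    using assms(1) ne by (intro integral_measure_pmf_real) auto
  also have "\<dots> = (\<Sum>z\<in>set_pmf p. indicator A z * f z * pmf p z) / measure_pmf.prob p A"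
    by (auto simp: pmf_cond[OF ne] sum_divide_distrib indicator_def intro: sum.cong)
  also have "(\<Sum>z\<in>set_pmf p. indicator A z * f z * pmf p z)
      = measure_pmf.expectation p (\<lambda>z. indicator A z * f z)"
    using assms(1) by (intro integral_measure_pmf_real[symmetric]) auto
  finally show ?thesis .
qed

lemma finite_set_pmf_joint:
  assumes "finite V" and "finite (set_pmf sch)"
  shows "finite (set_pmf (joint V sch))"
  using assms finite_type_profiles[of V] type_profiles_nonempty[of V]
  by (simp add: joint_def type_dist_def)

lemma expectation_joint_agent:
  fixes g :: "'v \<Rightarrow> ('v \<Rightarrow> real) \<Rightarrow> real"
  assumes "finite V" and "i < card V" and "finite (set_pmf sch)"
  shows "measure_pmf.expectation (joint V sch) (\<lambda>(t, s). g (t i) s)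
       = measure_pmf.expectation sch (\<lambda>s. \<Sum>u\<in>V. g u s) / card V"
proof -
  have V: "V \<noteq> {}" using assms(2) by auto
  have "map_pmf (\<lambda>(t, s). (t i, s)) (joint V sch) = pair_pmf (pmf_of_set V) sch"
    using map_pair[of "\<lambda>t. t i" id "type_dist V" sch] agent_type_uniform[OF assms(1,2)]
    by (simp add: joint_def id_def)
  also have "\<dots> = pmf_of_set V \<bind> (\<lambda>u. map_pmf (Pair u) sch)"
    by (simp add: pair_pmf_def map_pmf_def)
  finally have marginal: "map_pmf (\<lambda>(t, s). (t i, s)) (joint V sch) = \<dots>" .
  have "measure_pmf.expectation (joint V sch) (\<lambda>(t, s). g (t i) s)
      = measure_pmf.expectation (map_pmf (\<lambda>(t, s). (t i, s)) (joint V sch)) (\<lambda>(u, s). g u s)"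
    by (simp add: case_prod_beta')
  also have "\<dots>
      = measure_pmf.expectation (pmf_of_set V \<bind> (\<lambda>u. map_pmf (Pair u) sch)) (\<lambda>(u, s). g u s)"
    by (simp only: marginal)
  also have "\<dots> = (\<Sum>u\<in>V. measure_pmf.expectation sch (g u)) / card V"
    using V assms(1,3) by (simp add: pmf_expectation_bind_pmf_of_set divide_inverse_commute sum_distrib_left)
  also have "(\<Sum>u\<in>V. measure_pmf.expectation sch (g u))
      = measure_pmf.expectation sch (\<lambda>s. \<Sum>u\<in>V. g u s)"
    using assms(3) by (subst Bochner_Integration.integral_sum) (auto intro: integrable_measure_pmf_finite)
  finally show ?thesis .
qed

lemma prob_sig_event:
  assumes "finite V" and "i < card V" and "finite (set_pmf sch)"
  shows "measure_pmf.prob (joint V sch) (sig_event i \<theta>)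
       = measure_pmf.expectation sch (\<lambda>s. real (card {u \<in> V. s u = \<theta>})) / card V"
proof -
  have "measure_pmf.prob (joint V sch) (sig_event i \<theta>)
      = measure_pmf.expectation (joint V sch) (indicator (sig_event i \<theta>))"
    by simp
  also have "\<dots> = measure_pmf.expectation (joint V sch) (\<lambda>(t, s). of_bool (s (t i) = \<theta>))"
    by (rule Bochner_Integration.integral_cong) (auto simp: sig_event_def indicator_def)
  also have "\<dots> = measure_pmf.expectation sch (\<lambda>s. \<Sum>u\<in>V. of_bool (s u = \<theta>)) / card V"
    by (rule expectation_joint_agent[OF assms])
  finally show ?thesis
    using assms(1) by (simp add: Int_def conj_commute)
qed

lemma Q_eq_ratio:
  assumes "finite V" and "i < card V" and "finite (set_pmf sch)"
    and "measure_pmf.prob (joint V sch) (sig_event i \<theta>) > 0"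
  shows "Q V W sch i x \<theta>
     = measure_pmf.expectation sch
         (\<lambda>s. \<Sum>u\<in>{u \<in> V. s u = \<theta>}. x + (\<Sum>v\<in>V - {u}. W u v * s v))
       / measure_pmf.expectation sch (\<lambda>s. real (card {u \<in> V. s u = \<theta>}))"
proof -
  have "Q V W sch i x \<theta> = measure_pmf.expectation (joint V sch)
      (\<lambda>(t, s). if s (t i) = \<theta> then x + (\<Sum>v\<in>V - {t i}. W (t i) v * s v) else 0)
      / measure_pmf.prob (joint V sch) (sig_event i \<theta>)"
    unfolding Q_def
    by (subst expectation_cond_pmf[OF finite_set_pmf_joint[OF assms(1,3)] assms(4)])
       (auto simp: sig_event_def indicator_def intro!: Bochner_Integration.integral_cong)
  also have "measure_pmf.expectation (joint V sch)
      (\<lambda>(t, s). if s (t i) = \<theta> then x + (\<Sum>v\<in>V - {t i}. W (t i) v * s v) else 0)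
    = measure_pmf.expectation sch
        (\<lambda>s. \<Sum>u\<in>V. if s u = \<theta> then x + (\<Sum>v\<in>V - {u}. W u v * s v) else 0) / card V"
    by (rule expectation_joint_agent[OF assms(1-3)])
  finally show ?thesis
    using assms(1,2) by (simp add: prob_sig_event[OF assms(1-3)] sum.inter_filter)
qed

definition subset_scheme :: "real \<Rightarrow> 'v set pmf \<Rightarrow> ('v \<Rightarrow> real) pmf" where
  "subset_scheme \<alpha> D = map_pmf (\<lambda>S v. if v \<in> S then \<alpha> else 0) D"

lemma finite_set_pmf_subset_scheme:
  assumes "finite V" and "set_pmf D \<subseteq> Pow V"
  shows "finite (set_pmf D)" and "finite (set_pmf (subset_scheme \<alpha> D))"
proof -
  show "finite (set_pmf D)" using assms by (meson finite_Pow_iff finite_subset)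
  then show "finite (set_pmf (subset_scheme \<alpha> D))" by (simp add: subset_scheme_def)
qed

lemma level_set_subset_signal:
  assumes "S \<subseteq> V" and "\<alpha> \<noteq> 0"
  shows "{u \<in> V. (if u \<in> S then \<alpha> else 0) = \<theta>}
       = (if \<theta> = \<alpha> then S else if \<theta> = 0 then V - S else {})"
  using assms by auto

lemma sum_neighbours_subset_signal:
  fixes W :: "'v \<Rightarrow> 'v \<Rightarrow> real"
  assumes "finite V" and "S \<subseteq> V"
  shows "(\<Sum>v\<in>V - {u}. W u v * (if v \<in> S then \<alpha> else 0)) = \<alpha> * (\<Sum>v\<in>S - {u}. W u v)"
proof -
  have "(\<Sum>v\<in>V - {u}. W u v * (if v \<in> S then \<alpha> else 0))
      = (\<Sum>v\<in>(V - {u}) \<inter> S. \<alpha> * W u v)"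
    using assms(1) by (auto simp: sum.inter_restrict intro!: sum.cong split: if_splits)
  also have "(V - {u}) \<inter> S = S - {u}" using assms(2) by blast
  finally show ?thesis by (simp add: sum_distrib_left)
qed

lemma sum_off_diagonal_Induced:
  fixes W :: "'v \<Rightarrow> 'v \<Rightarrow> real"
  assumes "finite S" and "\<forall>v\<in>S. W v v = 1"
  shows "(\<Sum>u\<in>S. \<Sum>v\<in>S - {u}. W u v) = Induced W S - card S"
  using assms by (simp add: Induced_def sum_diff1 sum_subtractf)

lemma sum_Cut_swap:
  fixes W :: "'v \<Rightarrow> 'v \<Rightarrow> real"
  assumes "S \<subseteq> V" and "\<forall>u\<in>V. \<forall>v\<in>V. W u v = W v u"
  shows "(\<Sum>u\<in>V - S. \<Sum>v\<in>S - {u}. W u v) = Cut W S (V - S)"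
proof -
  have "(\<Sum>u\<in>V - S. \<Sum>v\<in>S - {u}. W u v) = (\<Sum>u\<in>V - S. \<Sum>v\<in>S. W v u)"
    using assms by (intro sum.cong) (auto simp: subset_iff)
  then show ?thesis by (simp add: Cut_def sum.swap[of _ "V - S"])
qed

lemma sum_payoff_subset_signal:
  fixes W :: "'v \<Rightarrow> 'v \<Rightarrow> real"
  assumes "finite V" and "S \<subseteq> V" and "\<forall>v\<in>V. W v v = 1"
  shows "(\<Sum>u\<in>S. x + (\<Sum>v\<in>V - {u}. W u v * (if v \<in> S then \<alpha> else 0)))
       = x * card S + \<alpha> * (Induced W S - card S)"
proof -
  have "finite S" using assms(1,2) by (rule finite_subset[rotated])
  then show ?thesis
    using assms sum_off_diagonal_Induced[of S W]
    by (simp add: sum_neighbours_subset_signal sum.distrib sum_distrib_left[symmetric] subset_iff)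
qed

lemma sum_payoff_subset_no_signal:
  fixes W :: "'v \<Rightarrow> 'v \<Rightarrow> real"
  assumes "finite V" and "S \<subseteq> V" and "\<forall>u\<in>V. \<forall>v\<in>V. W u v = W v u"
  shows "(\<Sum>u\<in>V - S. x + (\<Sum>v\<in>V - {u}. W u v * (if v \<in> S then \<alpha> else 0)))
       = x * card (V - S) + \<alpha> * Cut W S (V - S)"
  using assms sum_Cut_swap[OF assms(2,3)]
  by (simp add: sum_neighbours_subset_signal sum.distrib sum_distrib_left[symmetric])

lemma expectation_level_card_subset_scheme:
  assumes "set_pmf D \<subseteq> Pow V" and "\<alpha> \<noteq> 0"
  shows "measure_pmf.expectation (subset_scheme \<alpha> D) (\<lambda>s. real (card {u \<in> V. s u = \<theta>}))
       = (if \<theta> = \<alpha> then measure_pmf.expectation D (\<lambda>S. real (card S))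
          else if \<theta> = 0 then measure_pmf.expectation D (\<lambda>S. real (card (V - S))) else 0)"
proof -
  have level_card: "real (card {u \<in> V. (if u \<in> S then \<alpha> else 0) = \<theta>})
      = (if \<theta> = \<alpha> then card S else if \<theta> = 0 then card (V - S) else 0)" if "S \<in> set_pmf D" for S
    using assms that by (subst level_set_subset_signal) auto
  show ?thesis
    unfolding subset_scheme_def integral_map_pmf
    by (subst integral_cong_AE[OF _ _ AE_pmfI[OF level_card]]) auto
qed

lemma prob_sig_event_subset_scheme:
  assumes "finite V" and "i < card V" and "set_pmf D \<subseteq> Pow V" and "\<alpha> \<noteq> 0"
  shows "measure_pmf.prob (joint V (subset_scheme \<alpha> D)) (sig_event i \<theta>)
       = (if \<theta> = \<alpha> then measure_pmf.expectation D (\<lambda>S. real (card S))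
          else if \<theta> = 0 then measure_pmf.expectation D (\<lambda>S. real (card (V - S))) else 0) / card V"
  by (simp only: prob_sig_event[OF assms(1,2) finite_set_pmf_subset_scheme(2)[OF assms(1,3)]]
      expectation_level_card_subset_scheme[OF assms(3,4)])

lemma Q_subset_scheme_signal:
  fixes W :: "'v \<Rightarrow> 'v \<Rightarrow> real" and D :: "'v set pmf"
  assumes V: "finite V" and i: "i < card V" and D: "set_pmf D \<subseteq> Pow V" and \<alpha>: "\<alpha> \<noteq> 0"
    and Wdiag: "\<forall>v\<in>V. W v v = 1"
    and pos: "measure_pmf.prob (joint V (subset_scheme \<alpha> D)) (sig_event i \<alpha>) > 0"
  shows "Q V W (subset_scheme \<alpha> D) i x \<alpha>
       = x + \<alpha> * (measure_pmf.expectation D (\<lambda>S. Induced W S)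
                   / measure_pmf.expectation D (\<lambda>S. real (card S)) - 1)"
proof -
  let ?ES = "measure_pmf.expectation D (\<lambda>S. real (card S))"
  let ?EI = "measure_pmf.expectation D (\<lambda>S. Induced W S)"
  note fin = finite_set_pmf_subset_scheme[OF V D]
  have ES: "?ES > 0"
    using pos by (simp add: prob_sig_event_subset_scheme[OF V i D \<alpha>] zero_less_divide_iff)
  have payoff: "(\<Sum>u\<in>{u \<in> V. (if u \<in> S then \<alpha> else 0) = \<alpha>}.
        x + (\<Sum>v\<in>V - {u}. W u v * (if v \<in> S then \<alpha> else 0)))
      = x * card S + \<alpha> * (Induced W S - card S)" if "S \<in> set_pmf D" for S
    using that D \<alpha> V Wdiag by (subst level_set_subset_signal) (auto intro: sum_payoff_subset_signal)
  have "Q V W (subset_scheme \<alpha> D) i x \<alpha>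
      = measure_pmf.expectation D (\<lambda>S. x * card S + \<alpha> * (Induced W S - card S)) / ?ES"
    unfolding Q_eq_ratio[OF V i fin(2) pos] expectation_level_card_subset_scheme[OF D \<alpha>]
    by (simp add: subset_scheme_def integral_cong_AE[OF _ _ AE_pmfI[OF payoff]])
  also have "\<dots> = (x * ?ES + \<alpha> * (?EI - ?ES)) / ?ES"
    using fin(1) by (simp add: integrable_measure_pmf_finite)
  also have "\<dots> = x + \<alpha> * (?EI / ?ES - 1)"
    using ES by (simp add: field_simps)
  finally show ?thesis .
qed

lemma Q_subset_scheme_no_signal:
  fixes W :: "'v \<Rightarrow> 'v \<Rightarrow> real" and D :: "'v set pmf"
  assumes V: "finite V" and i: "i < card V" and D: "set_pmf D \<subseteq> Pow V" and \<alpha>: "\<alpha> \<noteq> 0"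
    and Wsym: "\<forall>u\<in>V. \<forall>v\<in>V. W u v = W v u"
    and pos: "measure_pmf.prob (joint V (subset_scheme \<alpha> D)) (sig_event i 0) > 0"
  shows "Q V W (subset_scheme \<alpha> D) i x 0
       = x + \<alpha> * (measure_pmf.expectation D (\<lambda>S. Cut W S (V - S))
                   / measure_pmf.expectation D (\<lambda>S. real (card (V - S))))"
proof -
  let ?EN = "measure_pmf.expectation D (\<lambda>S. real (card (V - S)))"
  let ?EC = "measure_pmf.expectation D (\<lambda>S. Cut W S (V - S))"
  note fin = finite_set_pmf_subset_scheme[OF V D]
  have EN: "?EN > 0"
    using pos \<alpha> by (simp add: prob_sig_event_subset_scheme[OF V i D \<alpha>] zero_less_divide_iff)
  have payoff: "(\<Sum>u\<in>{u \<in> V. (if u \<in> S then \<alpha> else 0) = 0}.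
        x + (\<Sum>v\<in>V - {u}. W u v * (if v \<in> S then \<alpha> else 0)))
      = x * card (V - S) + \<alpha> * Cut W S (V - S)" if "S \<in> set_pmf D" for S
    using that D \<alpha> V Wsym by (subst level_set_subset_signal) (auto intro: sum_payoff_subset_no_signal)
  have "Q V W (subset_scheme \<alpha> D) i x 0
      = measure_pmf.expectation D (\<lambda>S. x * card (V - S) + \<alpha> * Cut W S (V - S)) / ?EN"
    unfolding Q_eq_ratio[OF V i fin(2) pos] expectation_level_card_subset_scheme[OF D \<alpha>]
    using \<alpha> by (simp add: subset_scheme_def integral_cong_AE[OF _ _ AE_pmfI[OF payoff]])
  also have "\<dots> = (x * ?EN + \<alpha> * ?EC) / ?EN"
    using fin(1) by (simp add: integrable_measure_pmf_finite)
  also have "\<dots> = x + \<alpha> * (?EC / ?EN)"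
    using EN by (simp add: field_simps)
  finally show ?thesis .
qed

lemma card_le_Induced:
  fixes W :: "'v \<Rightarrow> 'v \<Rightarrow> real"
  assumes "finite S" and "\<forall>u\<in>S. \<forall>v\<in>S. 0 \<le> W u v" and "\<forall>v\<in>S. W v v = 1"
  shows "real (card S) \<le> Induced W S"
proof -
  have "real (card S) = (\<Sum>u\<in>S. W u u)" using assms(3) by simp
  also have "\<dots> \<le> (\<Sum>u\<in>S. \<Sum>v\<in>S. W u v)"
    using assms by (intro sum_mono member_le_sum) auto
  finally show ?thesis by (simp add: Induced_def)
qed

lemma expectation_card_le_Induced:
  fixes W :: "'v \<Rightarrow> 'v \<Rightarrow> real"
  assumes "finite V" and "set_pmf D \<subseteq> Pow V"
    and "\<forall>u\<in>V. \<forall>v\<in>V. 0 \<le> W u v" and "\<forall>v\<in>V. W v v = 1"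
  shows "measure_pmf.expectation D (\<lambda>S. real (card S)) \<le> measure_pmf.expectation D (\<lambda>S. Induced W S)"
proof (rule integral_mono_AE)
  show "AE S in measure_pmf D. real (card S) \<le> Induced W S"
  proof (rule AE_pmfI)
    fix S assume "S \<in> set_pmf D"
    then have "S \<subseteq> V" using assms(2) by blast
    then show "real (card S) \<le> Induced W S"
      using assms(1,3,4) by (intro card_le_Induced) (auto intro: finite_subset)
  qed
qed (auto intro: integrable_measure_pmf_finite[OF finite_set_pmf_subset_scheme(1)[OF assms(1,2)]])

lemma cost_subset_scheme:
  assumes "finite V" and "set_pmf D \<subseteq> Pow V" and "0 \<le> \<alpha>"
  shows "cost V (subset_scheme \<alpha> D) = \<alpha> * measure_pmf.expectation D (\<lambda>S. real (card S))"
proof -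
  have pointwise: "(\<Sum>v\<in>V. \<bar>if v \<in> S then \<alpha> else 0\<bar>) = \<alpha> * card S"
    if "S \<in> set_pmf D" for S
    using assms that by (simp add: sum.If_cases Int_absorb1 subset_iff)
  have "cost V (subset_scheme \<alpha> D)
      = measure_pmf.expectation D (\<lambda>S. \<Sum>v\<in>V. \<bar>if v \<in> S then \<alpha> else 0\<bar>)"
    by (simp add: cost_def subset_scheme_def)
  also have "\<dots> = measure_pmf.expectation D (\<lambda>S. \<alpha> * card S)"
    by (intro integral_cong_AE AE_pmfI pointwise) simp_all
  finally show ?thesis by simp
qed

lemma Least_affine_threshold:
  fixes f :: "real \<Rightarrow> real"
  assumes "\<And>x. f x = x + c" and "\<theta> = max 0 (1 - c)"
  shows "1 \<le> f \<theta> \<and> \<theta> = (LEAST x. 0 \<le> x \<and> 1 \<le> f x)"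
  using assms by (auto intro!: Least_equality[symmetric])

lemma persuasive_subset_scheme:
  fixes V :: "'v set" and W :: "'v \<Rightarrow> 'v \<Rightarrow> real" and D :: "'v set pmf"
  defines "ES \<equiv> measure_pmf.expectation D (\<lambda>S. real (card S))"
    and "EI \<equiv> measure_pmf.expectation D (\<lambda>S. Induced W S)"
    and "EN \<equiv> measure_pmf.expectation D (\<lambda>S. real (card (V - S)))"
    and "EC \<equiv> measure_pmf.expectation D (\<lambda>S. Cut W S (V - S))"
  assumes V: "finite V" and Wsym: "\<forall>u\<in>V. \<forall>v\<in>V. W u v = W v u"
    and Wdiag: "\<forall>v\<in>V. W v v = 1"
    and D: "set_pmf D \<subseteq> Pow V" and ES: "0 < ES" and EI: "0 < EI"
    and ratio: "D = return_pmf V \<or> EI / ES \<le> EC / EN"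
  shows "persuasive V W (subset_scheme (ES / EI) D)"
  unfolding persuasive_def
proof (intro allI impI)
  fix i \<theta>
  let ?\<alpha> = "ES / EI" and ?sch = "subset_scheme (ES / EI) D"
  assume i: "i < card V" and pos: "measure_pmf.prob (joint V ?sch) (sig_event i \<theta>) > 0"
  have \<alpha>: "?\<alpha> > 0" and \<alpha>_ne: "?\<alpha> \<noteq> 0" using ES EI by simp_all
  have "measure_pmf.prob (joint V ?sch) (sig_event i \<theta>)
      = (if \<theta> = ?\<alpha> then ES else if \<theta> = 0 then EN else 0) / card V"
    using prob_sig_event_subset_scheme[OF V i D \<alpha>_ne] by (simp only: ES_def EN_def)
  with pos consider "\<theta> = ?\<alpha>" | "\<theta> = 0" "0 < EN"
    by (auto split: if_splits simp: zero_less_divide_iff)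
  then show "1 \<le> Q V W ?sch i \<theta> \<theta> \<and> \<theta> = (LEAST x. 0 \<le> x \<and> 1 \<le> Q V W ?sch i x \<theta>)"
  proof cases
    case 1
    show ?thesis
    proof (rule Least_affine_threshold)
      show "Q V W ?sch i x \<theta> = x + ?\<alpha> * (EI / ES - 1)" for x
        using pos \<alpha> Wdiag unfolding 1 ES_def EI_def by (intro Q_subset_scheme_signal[OF V i D]) auto
      show "\<theta> = max 0 (1 - ?\<alpha> * (EI / ES - 1))"
        using 1 ES EI by (simp add: field_simps)
    qed
  next
    case 2
    then have "D \<noteq> return_pmf V" by (auto simp: EN_def)
    with ratio have "EI / ES \<le> EC / EN" by simp
    have "1 = ?\<alpha> * (EI / ES)" using ES EI by simp
    also have "\<dots> \<le> ?\<alpha> * (EC / EN)"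
      using \<open>EI / ES \<le> EC / EN\<close> \<alpha> by (intro mult_left_mono) auto
    finally have "1 \<le> ?\<alpha> * (EC / EN)" .
    show ?thesis
    proof (rule Least_affine_threshold)
      show "Q V W ?sch i x \<theta> = x + ?\<alpha> * (EC / EN)" for x
        using pos \<alpha> Wsym unfolding 2 EN_def EC_def by (intro Q_subset_scheme_no_signal[OF V i D]) auto
      show "\<theta> = max 0 (1 - ?\<alpha> * (EC / EN))"
        using 2 \<open>1 \<le> ?\<alpha> * (EC / EN)\<close> by simp
    qed
  qed
qed

theorem lemma3p4:
  fixes V :: "'v set" and W :: "'v \<Rightarrow> 'v \<Rightarrow> real" and D :: "'v set pmf"
  assumes finV: "finite V"
    and Wsym: "\<forall>u\<in>V. \<forall>v\<in>V. W u v = W v u"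
    and Wrange: "\<forall>u\<in>V. \<forall>v\<in>V. 0 \<le> W u v \<and> W u v \<le> 1"
    and Wdiag: "\<forall>v\<in>V. W v v = 1"
    and Dsupp: "set_pmf D \<subseteq> Pow V"
    and Epos: "measure_pmf.expectation D (\<lambda>S. real (card S)) > 0"
    and ratio: "D = return_pmf V \<or>
      measure_pmf.expectation D (\<lambda>S. Cut W S (V - S)) / measure_pmf.expectation D (\<lambda>S. real (card (V - S)))
        \<ge> measure_pmf.expectation D (\<lambda>S. Induced W S) / measure_pmf.expectation D (\<lambda>S. real (card S))"
  shows "let ES = measure_pmf.expectation D (\<lambda>S. real (card S));
             EI = measure_pmf.expectation D (\<lambda>S. Induced W S);
             \<alpha> = ES / EI;
             sch = map_pmf (\<lambda>S v. if v \<in> S then \<alpha> else 0) D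
         in is_signaling_scheme V {0, \<alpha>} sch \<and> persuasive V W sch \<and>
            cost V sch = ES\<^sup>2 / EI \<and> ES\<^sup>2 / EI \<le> ES"
proof -
  define ES where "ES = measure_pmf.expectation D (\<lambda>S. real (card S))"
  define EI where "EI = measure_pmf.expectation D (\<lambda>S. Induced W S)"
  have "ES \<le> EI"
    using expectation_card_le_Induced[OF finV Dsupp] Wrange Wdiag by (simp add: ES_def EI_def)
  with Epos have ES: "0 < ES" and EI: "0 < EI" and \<alpha>: "0 < ES / EI" "ES / EI \<le> 1"
    by (simp_all add: ES_def)
  have "persuasive V W (subset_scheme (ES / EI) D)"
    using persuasive_subset_scheme[OF finV Wsym Wdiag Dsupp] ES EI ratio by (simp add: ES_def EI_def)
  moreover have "cost V (subset_scheme (ES / EI) D) = ES\<^sup>2 / EI"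
    using cost_subset_scheme[OF finV Dsupp] \<alpha> by (simp add: ES_def power2_eq_square)
  moreover have "ES\<^sup>2 / EI \<le> ES"
    using ES EI \<open>ES \<le> EI\<close> by (simp add: power2_eq_square field_simps mult_left_mono)
  moreover have "is_signaling_scheme V {0, ES / EI} (subset_scheme (ES / EI) D)"
    using \<alpha> by (auto simp: is_signaling_scheme_def subset_scheme_def)
  ultimately show ?thesis
    unfolding Let_def subset_scheme_def ES_def EI_def by blast
qed

end
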